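(* Let $F_0$ be a quantifier-free formula in conjunctive normal form whose atoms are polynomial inequalities with integer coefficients over integer-valued variables (a QF-NIA formula). Consider the following procedure $\mathrm{SolveMinModels}(F_0)$, which is parametrized by a family of cost functions and by an optimization oracle. (1) Choose a finite set $B$ of artificial bounds (constraints $V\ge L$ or $V\le U$ with $L,U\in\mathbb{Z}$ on variables $V$ of $F_0$) sufficient to linearize $F_0$, and let $F$ be the linearization of $F_0$ with artificial bounds $B$ (as defined in the context). (2) Repeat until a time limit is exceeded: call the oracle on $(F,B)$. The oracle either returns $\mathrm{Unsat}$, which it does only if $F$ is unsatisfiable over the integers, or returns a model $M$ of $F$ minimizing $\mathrm{cost}(M)$ among all models of $F$, where $\mathrm{cost}$ is the cost function associated with the current $F$ and $B$. If the oracle returns $\mathrm{Unsat}$, the procedure returns $\mathrm{Unsat}$. Otherwise, if $\mathrm{cost}(M)=0$, the procedure returns $\mathrm{Sat}$. Otherwise, choose a nonempty set $S$ of bounds of $B$ violated by $M$. Form $B'$ from $B$ by replacing each $V\ge L$ in $S$ with $V\ge M(V)$ and each $V\le U$ in $S$ with $V\le M(V)$. Add to $F$ the case-splitting clauses $V=K\rightarrow v_Q=Q[V:=K]$ for every value $K$ newly included in the domain of $V$ and every monomial $Q$ linearized using $V$. Set $B:=B'$. (3) If the time limit is exceeded, return $\mathrm{Unknown}$. Suppose that, at every iteration, the cost function used is admissible for the current linearization $F$ of $F_0$ with the current artificial bounds $B$. Then: (i) if $\mathrm{SolveMinModels}(F_0)$ returns $\mathrm{Sat}$, then $F_0$ is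 satisfiable over the integers; and (ii) if $\mathrm{SolveMinModels}(F_0)$ returns $\mathrm{Unsat}$, then $F_0$ is unsatisfiable over the integers.
   Context: Linearization. Let $F_0$ be a QF-NIA formula and let $B$ be a set of artificial bounds, i.e. constraints $V\ge L$ or $V\le U$ on variables of $F_0$. A linearization $F$ of $F_0$ with artificial bounds $B$ is a QF-LIA formula obtained as follows. While some non-linear monomial $Q$ occurs, pick a variable $V$ of $Q$ that has both a lower bound $l$ and an upper bound $u$ in $F_0\cup B$. Introduce a fresh integer variable $v_Q$ and replace every occurrence of $Q$ by $v_Q$. Add, for each integer $K$ with $l\le K\le u$, the case-splitting clause $V=K\rightarrow v_Q=Q[V:=K]$, where $Q[V:=K]$ is $Q$ with $V$ evaluated at $K$. If new non-linear monomials appear in these clauses, they are processed in the same way. The resulting formula $F$ consists of the clauses of $F_0$ with monomials replaced, together with all case-splitting clauses. It does not contain the bounds of $B$. A model of $F$ is an integer assignment to the original and fresh variables satisfying $F$; it need not satisfy $B$. Admissibility. A function $\mathrm{cost}$ on the models of $F$ is admissible if (1) $\mathrm{cost}(M)\ge 0$ for every model $M$ of $F$, and (2) whenever $\mathrm{cost}(M)=0$, the assignment $M$ (restricted to the variables of $F_0$) is a model of $F_0$. *)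

theory Defs
  imports Complex_Main "HOL-Library.Multiset"
begin

text \<open>A monomial is a multiset of variables; a polynomial with integer coefficients
  is a list of (coefficient, monomial) pairs, read as their sum.\<close>
type_synonym 'a poly = "(int \<times> 'a multiset) list"

datatype rel = Le | Lt | Ge | Gt | Eq | Ne

text \<open>An atom (p, r) states  p r 0, e.g. (p, Ge) means p \<ge> 0.\<close>
type_synonym 'a atom = "'a poly \<times> rel"
text \<open>A clause is a disjunction of atoms; a CNF formula is a conjunction of clauses.\<close>
type_synonym 'a clause = "'a atom list"

definition poly_eval :: "('a \<Rightarrow> int) \<Rightarrow> 'a poly \<Rightarrow> int" where
  "poly_eval \<sigma> p = sum_list (map (\<lambda>(c, m). c * prod_mset (image_mset \<sigma> m)) p)"

fun rel_holds :: "rel \<Rightarrow> int \<Rightarrow> bool" where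
  "rel_holds Le x = (x \<le> 0)"
| "rel_holds Lt x = (x < 0)"
| "rel_holds Ge x = (x \<ge> 0)"
| "rel_holds Gt x = (x > 0)"
| "rel_holds Eq x = (x = 0)"
| "rel_holds Ne x = (x \<noteq> 0)"

definition atom_holds :: "('a \<Rightarrow> int) \<Rightarrow> 'a atom \<Rightarrow> bool" where
  "atom_holds \<sigma> a = rel_holds (snd a) (poly_eval \<sigma> (fst a))"

definition models :: "('a \<Rightarrow> int) \<Rightarrow> 'a clause set \<Rightarrow> bool" where
  "models \<sigma> F = (\<forall>C\<in>F. \<exists>a\<in>set C. atom_holds \<sigma> a)"

definition vars_cnf :: "'a clause list \<Rightarrow> 'a set" where
  "vars_cnf F0 = {x. \<exists>C\<in>set F0. \<exists>a\<in>set C. \<exists>(c, m)\<in>set (fst a). x \<in># m}"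

datatype 'a bound = Lower 'a int | Upper 'a int

fun bvar :: "'a bound \<Rightarrow> 'a" where
  "bvar (Lower v _) = v" | "bvar (Upper v _) = v"

fun bound_admits :: "'a bound \<Rightarrow> int \<Rightarrow> bool" where
  "bound_admits (Lower _ L) K = (K \<ge> L)"
| "bound_admits (Upper _ U) K = (K \<le> U)"

definition bound_holds :: "('a \<Rightarrow> int) \<Rightarrow> 'a bound \<Rightarrow> bool" where
  "bound_holds \<tau> b = bound_admits b (\<tau> (bvar b))"

definition bounds_of :: "'a clause list \<Rightarrow> 'a bound set" where
  "bounds_of F0 = {b. \<exists>a. [a] \<in> set F0 \<and> (\<forall>\<tau>. atom_holds \<tau> a = bound_holds \<tau> b)}"

definition has_lower :: "'a clause list \<Rightarrow> 'a bound set \<Rightarrow> 'a \<Rightarrow> bool" where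
  "has_lower F0 B v = (\<exists>L. Lower v L \<in> bounds_of F0 \<union> B)"

definition has_upper :: "'a clause list \<Rightarrow> 'a bound set \<Rightarrow> 'a \<Rightarrow> bool" where
  "has_upper F0 B v = (\<exists>U. Upper v U \<in> bounds_of F0 \<union> B)"

definition bdom :: "'a clause list \<Rightarrow> 'a bound set \<Rightarrow> 'a \<Rightarrow> int set" where
  "bdom F0 B v = {K. \<forall>b\<in>bounds_of F0 \<union> B. bvar b = v \<longrightarrow> bound_admits b K}"

text \<open>Variables of the linearization: original ones and fresh v_Q for monomials Q.\<close>
datatype 'a var = Orig 'a | Aux "'a multiset"

definition lin_mono :: "'a multiset \<Rightarrow> 'a var multiset" where
  "lin_mono m = (if size m \<ge> 2 then {#Aux m#} else image_mset Orig m)"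

definition lin_poly :: "'a poly \<Rightarrow> 'a var poly" where
  "lin_poly p = map (\<lambda>(c, m). (c, lin_mono m)) p"

definition lin_clause :: "'a clause \<Rightarrow> 'a var clause" where
  "lin_clause C = map (\<lambda>(p, r). (lin_poly p, r)) C"

text \<open>sel Q is the variable V of Q chosen to linearize Q.  rest sel Q is the monomial
  left over when V is evaluated: Q[V:=K] = K^(count Q V) * rest sel Q.\<close>
definition rest :: "('a multiset \<Rightarrow> 'a) \<Rightarrow> 'a multiset \<Rightarrow> 'a multiset" where
  "rest sel Q = filter_mset (\<lambda>x. x \<noteq> sel Q) Q"

text \<open>Monomials linearized: non-linear monomials of F0, and non-linear monomials
  newly appearing in case-splitting clauses.\<close>
inductive_set lin_monos :: "'a clause list \<Rightarrow> ('a multiset \<Rightarrow> 'a) \<Rightarrow> 'a multiset set"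
  for F0 sel where
  base: "C \<in> set F0 \<Longrightarrow> a \<in> set C \<Longrightarrow> (c, m) \<in> set (fst a) \<Longrightarrow> size m \<ge> 2
         \<Longrightarrow> m \<in> lin_monos F0 sel"
| step: "Q \<in> lin_monos F0 sel \<Longrightarrow> size (rest sel Q) \<ge> 2
         \<Longrightarrow> rest sel Q \<in> lin_monos F0 sel"

text \<open>Case-splitting clause  V = K \<longrightarrow> v_Q = Q[V:=K]  with V = sel Q, written as the
  clause  (V - K \<noteq> 0) \<or> (v_Q - K^c * lin(rest) = 0).\<close>
definition case_clause :: "('a multiset \<Rightarrow> 'a) \<Rightarrow> 'a multiset \<Rightarrow> int \<Rightarrow> 'a var clause" where
  "case_clause sel Q K =
     [([(1, {#Orig (sel Q)#}), (- K, {#})], Ne),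
      ((1, {#Aux Q#}) # lin_poly [(- (K ^ count Q (sel Q)), rest sel Q)], Eq)]"

definition sel_ok :: "'a clause list \<Rightarrow> 'a bound set \<Rightarrow> ('a multiset \<Rightarrow> 'a) \<Rightarrow> bool" where
  "sel_ok F0 B sel = (\<forall>Q\<in>lin_monos F0 sel.
      sel Q \<in># Q \<and> has_lower F0 B (sel Q) \<and> has_upper F0 B (sel Q))"

definition linearization ::
  "'a clause list \<Rightarrow> 'a bound set \<Rightarrow> ('a multiset \<Rightarrow> 'a) \<Rightarrow> 'a var clause set" where
  "linearization F0 B sel =
     lin_clause ` set F0 \<union>
     {case_clause sel Q K | Q K. Q \<in> lin_monos F0 sel \<and> K \<in> bdom F0 B (sel Q)}"

definition admissible ::
  "(('a var \<Rightarrow> int) \<Rightarrow> real) \<Rightarrow> 'a clause list \<Rightarrow> 'a var clause set \<Rightarrow> bool" where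
  "admissible cost F0 F =
     ((\<forall>M. models M F \<longrightarrow> cost M \<ge> 0) \<and>
      (\<forall>M. models M F \<and> cost M = 0 \<longrightarrow> models (M \<circ> Orig) (set F0)))"

definition is_min_model ::
  "(('a var \<Rightarrow> int) \<Rightarrow> real) \<Rightarrow> 'a var clause set \<Rightarrow> ('a var \<Rightarrow> int) \<Rightarrow> bool" where
  "is_min_model cost F M = (models M F \<and> (\<forall>M'. models M' F \<longrightarrow> cost M \<le> cost M'))"

fun relax :: "('a var \<Rightarrow> int) \<Rightarrow> 'a bound \<Rightarrow> 'a bound" where
  "relax M (Lower v _) = Lower v (M (Orig v))"
| "relax M (Upper v _) = Upper v (M (Orig v))"

definition new_clauses ::
  "'a clause list \<Rightarrow> ('a multiset \<Rightarrow> 'a) \<Rightarrow> 'a bound set \<Rightarrow> 'a bound set \<Rightarrow> 'a bound set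
   \<Rightarrow> 'a var clause set" where
  "new_clauses F0 sel S B B' =
     {case_clause sel Q K | Q K. Q \<in> lin_monos F0 sel \<and> (\<exists>b\<in>S. bvar b = sel Q) \<and>
        K \<in> bdom F0 B' (sel Q) - bdom F0 B (sel Q)}"

datatype result = Sat | Unsat | Unknown

text \<open>smm_loop F0 sel cost F B trace res: the loop (2)/(3) started in state (F, B) can
  return res, where trace lists the states (F, B) at which the oracle was called.
  The oracle behaviour is part of the rules: Unsat only if F has no integer model;
  otherwise a model of F minimizing cost F B.  The time limit may expire at any point.\<close>
inductive smm_loop ::
  "'a clause list \<Rightarrow> ('a multiset \<Rightarrow> 'a) \<Rightarrow>
   ('a var clause set \<Rightarrow> 'a bound set \<Rightarrow> ('a var \<Rightarrow> int) \<Rightarrow> real) \<Rightarrow>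
   'a var clause set \<Rightarrow> 'a bound set \<Rightarrow> ('a var clause set \<times> 'a bound set) list \<Rightarrow>
   result \<Rightarrow> bool"
  for F0 sel cost where
  timeout: "smm_loop F0 sel cost F B [] Unknown"
| unsat: "\<not> (\<exists>M. models M F) \<Longrightarrow> smm_loop F0 sel cost F B [(F, B)] Unsat"
| sat: "is_min_model (cost F B) F M \<Longrightarrow> cost F B M = 0
        \<Longrightarrow> smm_loop F0 sel cost F B [(F, B)] Sat"
| iter: "is_min_model (cost F B) F M \<Longrightarrow> cost F B M \<noteq> 0 \<Longrightarrow>
         S \<subseteq> B \<Longrightarrow> S \<noteq> {} \<Longrightarrow> (\<forall>b\<in>S. \<not> bound_holds (M \<circ> Orig) b) \<Longrightarrow>
         B' = (B - S) \<union> relax M ` S \<Longrightarrow>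
         F' = F \<union> new_clauses F0 sel S B B' \<Longrightarrow>
         smm_loop F0 sel cost F' B' tr res \<Longrightarrow>
         smm_loop F0 sel cost F B ((F, B) # tr) res"

text \<open>Full procedure: step (1) chooses a finite set B0 of artificial bounds on variables
  of F0 sufficient to linearize F0 (with the variable selection sel), and F is the
  linearization of F0 with B0.\<close>
definition solve_min_models ::
  "'a clause list \<Rightarrow> ('a multiset \<Rightarrow> 'a) \<Rightarrow>
   ('a var clause set \<Rightarrow> 'a bound set \<Rightarrow> ('a var \<Rightarrow> int) \<Rightarrow> real) \<Rightarrow>
   'a bound set \<Rightarrow> ('a var clause set \<times> 'a bound set) list \<Rightarrow> result \<Rightarrow> bool" where
  "solve_min_models F0 sel cost B0 trace res =
     (finite B0 \<and> (\<forall>b\<in>B0. bvar b \<in> vars_cnf F0) \<and> sel_ok F0 B0 sel \<and>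
      smm_loop F0 sel cost (linearization F0 B0 sel) B0 trace res)"

end

theory Submission
  imports Defs
begin

text \<open>For Sat, admissibility turns the zero-cost model returned by the oracle into a model
  of F0.  For Unsat: every model \<tau> of F0 extends, by giving each fresh variable v_Q the value
  \<tau>(Q), to a model of the linearized clauses of F0 and of every case-splitting clause
  V = K \<longrightarrow> v_Q = Q[V:=K], for all Q and K and independently of the bounds.  Every formula
  handed to the oracle consists of such clauses, so it is satisfiable whenever F0 is.\<close>

definition extend_model :: "('v \<Rightarrow> int) \<Rightarrow> 'v var \<Rightarrow> int" where
  "extend_model \<tau> v = (case v of Orig x \<Rightarrow> \<tau> x | Aux Q \<Rightarrow> prod_mset (image_mset \<tau> Q))"

lemma prod_mset_image_split_count:
  fixes f :: "'a \<Rightarrow> 'b::comm_monoid_mult"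
  shows "prod_mset (image_mset f Q) =
         f v ^ count Q v * prod_mset (image_mset f {#x \<in># Q. x \<noteq> v#})"
proof -
  have "prod_mset (image_mset f Q) =
        prod_mset (image_mset f {#x \<in># Q. x = v#}) * prod_mset (image_mset f {#x \<in># Q. x \<noteq> v#})"
    by (metis multiset_partition image_mset_union prod_mset.union)
  then show ?thesis
    by (simp add: filter_eq_replicate_mset)
qed

lemma prod_mset_extend_model_lin_mono:
  "prod_mset (image_mset (extend_model \<tau>) (lin_mono m)) = prod_mset (image_mset \<tau> m)"
  by (auto simp: lin_mono_def extend_model_def multiset.map_comp o_def)

lemma poly_eval_extend_model_lin_poly:
  "poly_eval (extend_model \<tau>) (lin_poly p) = poly_eval \<tau> p"
  unfolding poly_eval_def lin_poly_def
  by (induction p) (auto simp: prod_mset_extend_model_lin_mono)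

lemma models_extend_model_lin_clause:
  assumes "models \<tau> (set F0)"
  shows "models (extend_model \<tau>) (lin_clause ` set F0)"
  using assms unfolding models_def lin_clause_def atom_holds_def
  by (force simp: poly_eval_extend_model_lin_poly)

lemma models_extend_model_case_clause:
  "models (extend_model \<tau>) {case_clause sel Q K}"
proof (cases "\<tau> (sel Q) = K")
  case True
  have "poly_eval (extend_model \<tau>)
          ((1, {#Aux Q#}) # lin_poly [(- (K ^ count Q (sel Q)), rest sel Q)]) = 0"
    using True prod_mset_image_split_count[of \<tau> Q "sel Q"]
    by (simp add: poly_eval_extend_model_lin_poly[unfolded poly_eval_def]
                  poly_eval_def extend_model_def rest_def)
  then show ?thesis
    unfolding models_def case_clause_def atom_holds_def by auto
next
  case False
  then show ?thesis
    unfolding models_def case_clause_def atom_holds_def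
    by (auto simp: poly_eval_def extend_model_def)
qed

definition generable_clauses :: "'v clause list \<Rightarrow> ('v multiset \<Rightarrow> 'v) \<Rightarrow> 'v var clause set" where
  "generable_clauses F0 sel = lin_clause ` set F0 \<union> {case_clause sel Q K | Q K. True}"

lemma models_extend_model_generable_clauses:
  assumes "models \<tau> (set F0)"
  shows "models (extend_model \<tau>) (generable_clauses F0 sel)"
  using models_extend_model_lin_clause[OF assms] models_extend_model_case_clause
  unfolding generable_clauses_def models_def by blast

lemma linearization_subset_generable_clauses:
  "linearization F0 B sel \<subseteq> generable_clauses F0 sel"
  unfolding linearization_def generable_clauses_def by blast

lemma new_clauses_subset_generable_clauses:
  "new_clauses F0 sel S B B' \<subseteq> generable_clauses F0 sel"
  unfolding new_clauses_def generable_clauses_def by blast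

lemma models_subset: "models M F \<Longrightarrow> F' \<subseteq> F \<Longrightarrow> models M F'"
  unfolding models_def by blast

lemma smm_loop_Unsat_sound:
  assumes "smm_loop F0 sel cost F B tr Unsat"
    and "F \<subseteq> generable_clauses F0 sel"
  shows "\<not> models \<tau> (set F0)"
  using assms
proof (induction F B tr "Unsat" rule: smm_loop.induct)
  case (unsat F B)
  show ?case
  proof
    assume "models \<tau> (set F0)"
    then have "models (extend_model \<tau>) F"
      using models_extend_model_generable_clauses models_subset unsat.prems by blast
    with unsat.hyps show False by blast
  qed
next
  case (iter F B M S B' F' tr)
  have "F' \<subseteq> generable_clauses F0 sel"
    using iter.hyps(7) iter.prems new_clauses_subset_generable_clauses by blast
  then show ?case
    by (rule iter.hyps(9))
qed

lemma smm_loop_Sat_sound: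
  assumes "smm_loop F0 sel cost F B tr Sat"
    and "\<forall>(F, B)\<in>set tr. admissible (cost F B) F0 F"
  shows "\<exists>\<tau>. models \<tau> (set F0)"
  using assms
proof (induction F B tr "Sat" rule: smm_loop.induct)
  case (sat F B M)
  then show ?case
    unfolding admissible_def is_min_model_def by auto
qed simp

theorem theorem3p1:
  fixes F0 :: "'v clause list"
    and sel :: "'v multiset \<Rightarrow> 'v"
    and cost :: "'v var clause set \<Rightarrow> 'v bound set \<Rightarrow> ('v var \<Rightarrow> int) \<Rightarrow> real"
  assumes run: "solve_min_models F0 sel cost B0 trace res"
    and adm: "\<forall>(F, B)\<in>set trace. admissible (cost F B) F0 F"
  shows "(res = Sat \<longrightarrow> (\<exists>\<tau>. models \<tau> (set F0))) \<and>
         (res = Unsat \<longrightarrow> \<not> (\<exists>\<tau>. models \<tau> (set F0)))"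
proof -
  have loop: "smm_loop F0 sel cost (linearization F0 B0 sel) B0 trace res"
    using run unfolding solve_min_models_def by blast
  show ?thesis
  proof (intro conjI impI)
    assume "res = Sat"
    with loop show "\<exists>\<tau>. models \<tau> (set F0)"
      using smm_loop_Sat_sound adm by blast
  next
    assume "res = Unsat"
    with loop show "\<not> (\<exists>\<tau>. models \<tau> (set F0))"
      using smm_loop_Unsat_sound linearization_subset_generable_clauses by blast
  qed
qed

end
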